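(* Let $n\ge 6$ and let $CTG_n$ be the set of chemical tricyclic graphs on $n$ vertices. Define the following subsets of $CTG_n$ (in each, all $m_{i,j}$ not listed are $0$): for $j=0,1,\dots,5$, $\gamma_{9+j}$ is the set of $G\in CTG_n$ with $n_4=0,n_3=4,n_2=n-4,n_1=0$, $m_{2,3}=2+2j$, $m_{3,3}=5-j$, $m_{2,2}=n-5-j$; and $\gamma_{65}$ is the set of $G\in CTG_n$ with $n_4=0,n_3=5,n_2=n-6,n_1=1$, $m_{1,2}=1$, $m_{2,3}=1$, $m_{3,3}=7$, $m_{2,2}=n-7$. Let $G_1\in\gamma_9$, $G_2\in\gamma_{10}$, $G_3\in\gamma_{11}$, $G_4\in\gamma_{12}$, $G_5\in\gamma_{13}$, $G_6\in\gamma_{14}$, $G_7\in\gamma_{65}$, and let $G\in CTG_n$ not belong to $\gamma_9\cup\cdots\cup\gamma_{14}\cup\gamma_{65}$. Then $SO_{red}(G_1)<SO_{red}(G_2)<\cdots<SO_{red}(G_7)<SO_{red}(G)$.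
   Context: All graphs are simple and connected. A chemical graph is a graph with maximum degree at most $4$; a tricyclic graph is a connected graph with $n$ vertices and $n+2$ edges. $d_G(u)$ is the degree of $u$, $n_i$ the number of vertices of degree $i$, and $m_{i,j}$ the number of edges joining a vertex of degree $i$ to a vertex of degree $j$. The reduced Sombor index is $SO_{red}(G)=\sum_{uv\in E(G)}\sqrt{(d_G(u)-1)^2+(d_G(v)-1)^2}$. *)

theory Defs
  imports Complex_Main
begin

type_synonym 'a graph = "'a set \<times> 'a set set"

definition simple_graph :: "'a graph \<Rightarrow> bool" where
  "simple_graph G \<longleftrightarrow> finite (fst G) \<and> (\<forall>e\<in>snd G. e \<subseteq> fst G \<and> card e = 2)"

definition adj_rel :: "'a graph \<Rightarrow> ('a \<times> 'a) set" where
  "adj_rel G = {(u, v). {u, v} \<in> snd G}"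

definition connected_graph :: "'a graph \<Rightarrow> bool" where
  "connected_graph G \<longleftrightarrow> simple_graph G \<and> fst G \<noteq> {} \<and>
     (\<forall>u\<in>fst G. \<forall>v\<in>fst G. (u, v) \<in> (adj_rel G)\<^sup>*)"

definition deg :: "'a graph \<Rightarrow> 'a \<Rightarrow> nat" where
  "deg G v = card {e \<in> snd G. v \<in> e}"

definition nv :: "'a graph \<Rightarrow> nat \<Rightarrow> nat" where
  "nv G i = card {v \<in> fst G. deg G v = i}"

definition me :: "'a graph \<Rightarrow> nat \<Rightarrow> nat \<Rightarrow> nat" where
  "me G i j = card {e \<in> snd G. deg G ` e = {i, j}}"

definition chemical :: "'a graph \<Rightarrow> bool" where
  "chemical G \<longleftrightarrow> (\<forall>v\<in>fst G. deg G v \<le> 4)"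

definition tricyclic :: "'a graph \<Rightarrow> bool" where
  "tricyclic G \<longleftrightarrow> connected_graph G \<and> card (snd G) = card (fst G) + 2"

definition CTG :: "nat \<Rightarrow> 'a graph \<Rightarrow> bool" where
  "CTG n G \<longleftrightarrow> tricyclic G \<and> chemical G \<and> card (fst G) = n"

text \<open>Reduced Sombor index: for an edge e = {u,v} (u \<noteq> v) the summand is
  sqrt((d u - 1)^2 + (d v - 1)^2) = sqrt(\<Sum>x\<in>e. (d x - 1)^2).\<close>
definition SO_red :: "'a graph \<Rightarrow> real" where
  "SO_red G = (\<Sum>e\<in>snd G. sqrt (\<Sum>x\<in>e. (real (deg G x) - 1)^2))"

definition gamma9 :: "nat \<Rightarrow> nat \<Rightarrow> 'a graph \<Rightarrow> bool" where
  "gamma9 n j G \<longleftrightarrow> CTG n G \<and>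
     nv G 4 = 0 \<and> nv G 3 = 4 \<and> int (nv G 2) = int n - 4 \<and> nv G 1 = 0 \<and>
     int (me G 2 3) = 2 + 2 * int j \<and> int (me G 3 3) = 5 - int j \<and>
     int (me G 2 2) = int n - 5 - int j \<and>
     (\<forall>a b. {a, b} \<notin> {{2,3}, {3,3}, {2,2}} \<longrightarrow> me G a b = 0)"

definition gamma65 :: "nat \<Rightarrow> 'a graph \<Rightarrow> bool" where
  "gamma65 n G \<longleftrightarrow> CTG n G \<and>
     nv G 4 = 0 \<and> nv G 3 = 5 \<and> int (nv G 2) = int n - 6 \<and> nv G 1 = 1 \<and>
     me G 1 2 = 1 \<and> me G 2 3 = 1 \<and> me G 3 3 = 7 \<and> int (me G 2 2) = int n - 7 \<and>
     (\<forall>a b. {a, b} \<notin> {{1,2}, {2,3}, {3,3}, {2,2}} \<longrightarrow> me G a b = 0)"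

end

theory Submission
  imports Defs
begin

text \<open>Grouping the edges by the degrees of their endpoints writes \<open>SO_red G\<close> as
  \<open>\<Sum> m_ij sqrt ((i - 1)^2 + (j - 1)^2)\<close>. For a chemical graph with n vertices and n + 2 edges,
  the handshake identities \<open>i n_i = \<Sum>_j (1 + [i = j]) m_ij\<close>, together with \<open>\<Sum> n_i = n\<close> and
  \<open>\<Sum> m_ij = n + 2\<close>, eliminate \<open>m_22\<close> and \<open>m_33\<close> and leave \<open>SO_red G = (n + 8) sqrt 2 + E(G)\<close>,
  where the excess \<open>E(G)\<close> is a combination of the remaining \<open>m_ij\<close> with positive coefficients.
  On \<open>\<gamma>_(9+j)\<close> only \<open>m_23 = 2 + 2j\<close> contributes, so \<open>E = (2 + 2j)(sqrt 5 - 3/2 sqrt 2)\<close>,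
  while \<open>E = 1 + sqrt 5 - sqrt 2\<close> on \<open>\<gamma>_65\<close>; this orders \<open>G_1, \<dots>, G_7\<close>. Conversely,
  \<open>E(G) \<le> 1 + sqrt 5 - sqrt 2\<close> bounds the \<open>m_ij\<close> so tightly that, using
  \<open>n_3 + 2 n_4 = 4 + n_1\<close> and connectivity, only the degree statistics of
  \<open>\<gamma>_9, \<dots>, \<gamma>_14, \<gamma>_65\<close> remain.\<close>

lemma finite_edges: "simple_graph G \<Longrightarrow> finite (snd G)"
  unfolding simple_graph_def by (meson PowI finite_Pow_iff finite_subset subsetI)

lemma simple_graph_edgeE:
  assumes "simple_graph G" "e \<in> snd G"
  obtains u v where "u \<noteq> v" "e = {u, v}" "u \<in> fst G" "v \<in> fst G"
  using assms unfolding simple_graph_def by (metis card_2_iff insert_subset)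

lemma deg_pos_if_incident:
  assumes "simple_graph G" "e \<in> snd G" "v \<in> e"
  shows "0 < deg G v"
  using assms finite_edges[OF assms(1)] unfolding deg_def by (auto simp: card_gt_0_iff)

lemma me_commute: "me G a b = me G b a"
  by (simp add: me_def insert_commute)

section \<open>Counting edges by the degrees of their endpoints\<close>

text \<open>Since \<^const>\<open>me\<close> depends only on the set \<open>{a, b}\<close>, \<open>degree_pairs k\<close> lists every degree
  type of an edge exactly once.\<close>

definition degree_pairs :: "nat \<Rightarrow> (nat \<times> nat) set" where
  "degree_pairs k = {(a, b). 1 \<le> a \<and> a \<le> b \<and> b \<le> k}"

lemma finite_degree_pairs: "finite (degree_pairs k)"
  by (rule finite_subset[of _ "{1..k} \<times> {1..k}"]) (auto simp: degree_pairs_def)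

lemma inj_on_doubleton_degree_pairs: "inj_on (\<lambda>(a, b). {a, b}) (degree_pairs k)"
  by (auto simp: inj_on_def degree_pairs_def doubleton_eq_iff)

lemma degree_pairs_4:
  "degree_pairs 4 = {(1,1), (1,2), (1,3), (1,4), (2,2), (2,3), (2,4), (3,3), (3,4), (4,4)}"
proof (intro set_eqI iffI)
  fix p assume "p \<in> degree_pairs 4"
  then obtain a b where p: "p = (a, b)" and ab: "1 \<le> a" "a \<le> b" "b \<le> 4"
    by (auto simp: degree_pairs_def)
  then have "a = 1 \<or> a = 2 \<or> a = 3 \<or> a = 4" "b = 1 \<or> b = 2 \<or> b = 3 \<or> b = 4" by arith+
  then show "p \<in> {(1,1), (1,2), (1,3), (1,4), (2,2), (2,3), (2,4), (3,3), (3,4), (4,4)}"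
    using p ab(2) by (elim disjE) simp_all
qed (auto simp: degree_pairs_def)

lemma edge_degree_pairE:
  assumes "simple_graph G" "\<forall>v\<in>fst G. deg G v \<le> k" "e \<in> snd G"
  obtains a b where "(a, b) \<in> degree_pairs k" "deg G ` e = {a, b}"
proof -
  obtain u v where uv: "e = {u, v}" "u \<in> fst G" "v \<in> fst G"
    using simple_graph_edgeE[OF assms(1,3)] by metis
  let ?a = "min (deg G u) (deg G v)" and ?b = "max (deg G u) (deg G v)"
  have "0 < deg G u" "0 < deg G v" using deg_pos_if_incident[OF assms(1,3)] uv(1) by auto
  moreover have "deg G u \<le> k" "deg G v \<le> k" using assms(2) uv by auto
  ultimately have "(?a, ?b) \<in> degree_pairs k" by (auto simp: degree_pairs_def)
  moreover have "deg G ` e = {?a, ?b}" using uv(1) by (auto simp: min_def max_def)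
  ultimately show ?thesis using that by blast
qed

lemma sum_edges_by_degree_pairs:
  fixes \<phi> :: "nat set \<Rightarrow> 'b::comm_semiring_1"
  assumes G: "simple_graph G" "\<forall>v\<in>fst G. deg G v \<le> k"
  shows "(\<Sum>e\<in>snd G. \<phi> (deg G ` e))
    = (\<Sum>(a, b)\<in>degree_pairs k. of_nat (me G a b) * \<phi> {a, b})"
proof -
  let ?types = "(\<lambda>(a, b). {a, b}) ` degree_pairs k"
  let ?count = "\<lambda>S. card {e \<in> snd G. deg G ` e = S}"
  have types: "(\<lambda>e. deg G ` e) ` snd G \<subseteq> ?types"
    by (auto elim!: edge_degree_pairE[OF G])
  have "(\<Sum>e\<in>snd G. \<phi> (deg G ` e))
      = (\<Sum>S\<in>?types. \<Sum>e | e \<in> snd G \<and> deg G ` e = S. \<phi> (deg G ` e))"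
    by (rule sum.group[OF finite_edges[OF G(1)] finite_imageI[OF finite_degree_pairs] types,
          symmetric])
  also have "\<dots> = (\<Sum>S\<in>?types. of_nat (?count S) * \<phi> S)"
    by (intro sum.cong) auto
  also have "\<dots> = (\<Sum>(a, b)\<in>degree_pairs k. of_nat (me G a b) * \<phi> {a, b})"
    using sum.reindex[OF inj_on_doubleton_degree_pairs, of "\<lambda>S. of_nat (?count S) * \<phi> S"]
    by (simp add: case_prod_unfold me_def)
  finally show ?thesis .
qed

lemma sum_edge_eq_Min_Max:
  assumes "simple_graph G" "e \<in> snd G"
  shows "(\<Sum>x\<in>e. g (deg G x)) = g (Min (deg G ` e)) + g (Max (deg G ` e))"
proof -
  obtain u v where "u \<noteq> v" "e = {u, v}" using simple_graph_edgeE[OF assms] by metis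
  then show ?thesis by (cases "deg G u \<le> deg G v") (auto simp: add.commute max_def min_def)
qed

lemma sum_edges_endpoint_sum_by_degree_pairs:
  fixes g :: "nat \<Rightarrow> 'b::comm_monoid_add" and f :: "'b \<Rightarrow> 'c::comm_semiring_1"
  assumes G: "simple_graph G" "\<forall>v\<in>fst G. deg G v \<le> k"
  shows "(\<Sum>e\<in>snd G. f (\<Sum>x\<in>e. g (deg G x)))
    = (\<Sum>(a, b)\<in>degree_pairs k. of_nat (me G a b) * f (g a + g b))"
proof -
  have "(\<Sum>e\<in>snd G. f (\<Sum>x\<in>e. g (deg G x)))
      = (\<Sum>e\<in>snd G. f (g (Min (deg G ` e)) + g (Max (deg G ` e))))"
    using sum_edge_eq_Min_Max[OF G(1), of _ g] by (intro sum.cong) auto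
  also have "\<dots> = (\<Sum>(a, b)\<in>degree_pairs k.
      of_nat (me G a b) * f (g (Min {a, b}) + g (Max {a, b})))"
    by (rule sum_edges_by_degree_pairs[OF G, of "\<lambda>S. f (g (Min S) + g (Max S))"])
  also have "\<dots> = (\<Sum>(a, b)\<in>degree_pairs k. of_nat (me G a b) * f (g a + g b))"
    by (intro sum.cong) (auto simp: degree_pairs_def max_def min_def)
  finally show ?thesis .
qed

lemma sum_weighted_deg_eq_sum_edges:
  fixes h :: "'a \<Rightarrow> 'b::comm_semiring_1"
  assumes "simple_graph G"
  shows "(\<Sum>v\<in>fst G. h v * of_nat (deg G v)) = (\<Sum>e\<in>snd G. \<Sum>x\<in>e. h x)"
proof -
  have fin: "finite (fst G)" "finite (snd G)"
    using assms finite_edges[OF assms] unfolding simple_graph_def by auto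
  have "(\<Sum>v\<in>fst G. h v * of_nat (deg G v))
      = (\<Sum>v\<in>fst G. \<Sum>e\<in>snd G. if v \<in> e then h v else 0)"
    using fin by (simp add: deg_def mult.commute flip: sum.inter_filter)
  also have "\<dots> = (\<Sum>e\<in>snd G. \<Sum>v\<in>fst G. if v \<in> e then h v else 0)"
    by (rule sum.swap)
  also have "\<dots> = (\<Sum>e\<in>snd G. \<Sum>x\<in>e. h x)"
  proof (rule sum.cong[OF refl])
    fix e assume "e \<in> snd G"
    then have "{v \<in> fst G. v \<in> e} = e" using assms unfolding simple_graph_def by blast
    then show "(\<Sum>v\<in>fst G. if v \<in> e then h v else 0) = (\<Sum>x\<in>e. h x)"
      using sum.inter_filter[OF fin(1), of h "\<lambda>v. v \<in> e"] by simp
  qed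
  finally show ?thesis .
qed

lemma nv_handshake:
  assumes G: "simple_graph G" "\<forall>v\<in>fst G. deg G v \<le> k"
  shows "i * nv G i
    = (\<Sum>(a, b)\<in>degree_pairs k. me G a b * (of_bool (a = i) + of_bool (b = i)))"
proof -
  have "finite (fst G)" using G(1) unfolding simple_graph_def by simp
  then have "i * nv G i = (\<Sum>v\<in>fst G. if deg G v = i then i else 0)"
    by (simp add: nv_def flip: sum.inter_filter)
  also have "\<dots> = (\<Sum>v\<in>fst G. of_bool (deg G v = i) * deg G v)"
    by (intro sum.cong) auto
  also have "\<dots> = (\<Sum>e\<in>snd G. id (\<Sum>x\<in>e. of_bool (deg G x = i)))"
    using sum_weighted_deg_eq_sum_edges[OF G(1), of "\<lambda>v. of_bool (deg G v = i) :: nat"]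
    by simp
  also have "\<dots>
      = (\<Sum>(a, b)\<in>degree_pairs k. me G a b * (of_bool (a = i) + of_bool (b = i)))"
    using sum_edges_endpoint_sum_by_degree_pairs[OF G, of id "\<lambda>d. of_bool (d = i) :: nat"]
    by simp
  finally show ?thesis .
qed

lemma card_edges_eq_sum_me:
  assumes "simple_graph G" "\<forall>v\<in>fst G. deg G v \<le> k"
  shows "card (snd G) = (\<Sum>(a, b)\<in>degree_pairs k. me G a b)"
  using sum_edges_by_degree_pairs[OF assms, of "\<lambda>_. 1::nat"] by (simp add: case_prod_unfold)

section \<open>Connectivity and bounds on edge counts\<close>

lemma card_verts_ge_2:
  assumes "simple_graph G" "snd G \<noteq> {}"
  shows "2 \<le> card (fst G)"
proof -
  obtain e where "e \<in> snd G" using assms(2) by blast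
  then have "e \<subseteq> fst G" "card e = 2" "finite (fst G)"
    using assms(1) unfolding simple_graph_def by auto
  then show ?thesis by (metis card_mono)
qed

lemma connected_graph_edge_leavingE:
  assumes "connected_graph G" "u \<in> A" "u \<in> fst G" "w \<in> fst G" "w \<notin> A"
  obtains x y where "{x, y} \<in> snd G" "x \<in> A" "y \<notin> A"
proof -
  have "(u, w) \<in> (adj_rel G)\<^sup>*" using assms unfolding connected_graph_def by blast
  then have "\<exists>x y. (x, y) \<in> adj_rel G \<and> x \<in> A \<and> y \<notin> A"
    using assms(2,5) by (induction rule: rtrancl_induct) auto
  then show ?thesis using that unfolding adj_rel_def by auto
qed

lemma deg_pos_connected:
  assumes "connected_graph G" "2 \<le> card (fst G)" "v \<in> fst G"
  shows "0 < deg G v"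
proof -
  have "\<not> fst G \<subseteq> {v}"
    using assms(2) card_mono[of "{v}" "fst G"] by auto
  then obtain w where "w \<in> fst G" "w \<notin> {v}" by blast
  then obtain y where "{v, y} \<in> snd G"
    using connected_graph_edge_leavingE[OF assms(1) singletonI assms(3)] by blast
  then show ?thesis
    using deg_pos_if_incident[of G "{v, y}" v] assms(1) unfolding connected_graph_def by simp
qed

lemma card_verts_eq_sum_nv:
  assumes G: "connected_graph G" "2 \<le> card (fst G)" "\<forall>v\<in>fst G. deg G v \<le> k"
  shows "card (fst G) = (\<Sum>i=1..k. nv G i)"
proof -
  have fin: "finite (fst G)" using G(1) unfolding connected_graph_def simple_graph_def by blast
  have degs: "deg G ` fst G \<subseteq> {1..k}"
    using deg_pos_connected[OF G(1,2)] G(3) by (auto simp: Suc_le_eq)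
  show ?thesis
    using sum.group[OF fin finite_atLeastAtMost degs, of "\<lambda>_. 1::nat"] by (simp add: nv_def)
qed

lemma me_pos_imp_degree_pair:
  assumes G: "simple_graph G" "\<forall>v\<in>fst G. deg G v \<le> k" and "0 < me G a b"
  shows "(min a b, max a b) \<in> degree_pairs k"
proof -
  obtain e where "e \<in> snd G" "deg G ` e = {a, b}"
    using assms(3) unfolding me_def card_gt_0_iff by blast
  then obtain a' b' where "(a', b') \<in> degree_pairs k" "{a, b} = {a', b'}"
    using edge_degree_pairE[OF G] by metis
  then show ?thesis by (auto simp: degree_pairs_def doubleton_eq_iff)
qed

lemma me_eq_0_outside:
  assumes G: "simple_graph G" "\<forall>v\<in>fst G. deg G v \<le> k"
    and zero: "\<forall>(a, b)\<in>degree_pairs k. {a, b} \<notin> S \<longrightarrow> me G a b = 0"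
    and "{a, b} \<notin> S"
  shows "me G a b = 0"
proof (rule ccontr)
  assume "me G a b \<noteq> 0"
  then have "(min a b, max a b) \<in> degree_pairs k" using me_pos_imp_degree_pair[OF G] by simp
  moreover have "{min a b, max a b} = {a, b}" by (auto simp: min_def max_def)
  ultimately have "me G a b = 0" using zero assms(4) by (force simp: me_def)
  with \<open>me G a b \<noteq> 0\<close> show False ..
qed

lemma me_pos_leaving_degree_class:
  assumes G: "connected_graph G" "\<forall>v\<in>fst G. deg G v \<le> k"
    and "0 < nv G i" "nv G i < card (fst G)"
  shows "\<exists>d. 1 \<le> d \<and> d \<le> k \<and> d \<noteq> i \<and> 0 < me G i d"
proof -
  let ?A = "{v \<in> fst G. deg G v = i}"
  have sg: "simple_graph G" using G(1) unfolding connected_graph_def by blast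
  have "?A \<noteq> {}" using assms(3) unfolding nv_def by (metis card.empty less_irrefl)
  then obtain u where u: "u \<in> ?A" by blast
  have "?A \<noteq> fst G" using assms(4) unfolding nv_def by auto
  then obtain w where w: "w \<in> fst G" "w \<notin> ?A" by blast
  obtain x y where e: "{x, y} \<in> snd G" "x \<in> ?A" "y \<notin> ?A"
    using connected_graph_edge_leavingE[OF G(1) u _ w] u by blast
  have "y \<in> fst G" using e(1) sg unfolding simple_graph_def by blast
  then have "deg G y \<noteq> i" using e(3) by simp
  moreover have "{x, y} \<in> {e \<in> snd G. deg G ` e = {i, deg G y}}" using e(1,2) by auto
  then have "0 < me G i (deg G y)"
    unfolding me_def using finite_edges[OF sg] by (auto simp: card_gt_0_iff)
  moreover have "1 \<le> deg G y" "deg G y \<le> k"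
    using deg_pos_if_incident[OF sg e(1)] G(2) \<open>y \<in> fst G\<close> by (auto simp: Suc_le_eq)
  ultimately show ?thesis by blast
qed

lemma me_le_choose:
  assumes "simple_graph G"
  shows "me G a a \<le> nv G a choose 2"
proof -
  let ?A = "{v \<in> fst G. deg G v = a}"
  have fin: "finite (fst G)" using assms simple_graph_def by blast
  have "{e \<in> snd G. deg G ` e = {a, a}} \<subseteq> {B. B \<subseteq> ?A \<and> card B = 2}"
    using assms unfolding simple_graph_def by (auto dest: equalityD1)
  then have "me G a a \<le> card {B. B \<subseteq> ?A \<and> card B = 2}"
    unfolding me_def using fin by (intro card_mono) auto
  also have "\<dots> = nv G a choose 2" using fin by (simp add: n_subsets nv_def)
  finally show ?thesis .
qed

lemma me_le_mult:
  assumes "simple_graph G"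
  shows "me G a b \<le> nv G a * nv G b"
proof -
  let ?A = "{v \<in> fst G. deg G v = a}" and ?B = "{v \<in> fst G. deg G v = b}"
  let ?edge = "\<lambda>(u, v). {u, v}"
  have fin: "finite (?A \<times> ?B)" using assms unfolding simple_graph_def by auto
  have "{e \<in> snd G. deg G ` e = {a, b}} \<subseteq> ?edge ` (?A \<times> ?B)"
  proof
    fix e assume "e \<in> {e \<in> snd G. deg G ` e = {a, b}}"
    then have e: "e \<in> snd G" "deg G ` e = {a, b}" by auto
    obtain u v where uv: "e = {u, v}" "u \<in> fst G" "v \<in> fst G"
      using simple_graph_edgeE[OF assms e(1)] by metis
    then have "deg G u = a \<and> deg G v = b \<or> deg G u = b \<and> deg G v = a"
      using e(2) by (simp add: doubleton_eq_iff)
    then show "e \<in> ?edge ` (?A \<times> ?B)"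
      using uv by (auto simp: image_iff insert_commute)
  qed
  then have "me G a b \<le> card (?edge ` (?A \<times> ?B))"
    unfolding me_def by (intro card_mono finite_imageI fin)
  also have "\<dots> \<le> nv G a * nv G b"
    using card_image_le[OF fin] by (simp add: nv_def card_cartesian_product)
  finally show ?thesis .
qed

section \<open>The reduced Sombor index of a chemical tricyclic graph\<close>

lemma CTG_imp_simple_graph: "CTG n G \<Longrightarrow> simple_graph G"
  by (simp add: CTG_def tricyclic_def connected_graph_def)

lemma CTG_imp_degree_le_4: "CTG n G \<Longrightarrow> \<forall>v\<in>fst G. deg G v \<le> 4"
  by (simp add: CTG_def chemical_def)

lemma CTG_degree_equations:
  assumes "CTG n G"
  shows "n = nv G 1 + nv G 2 + nv G 3 + nv G 4"
    and "n + 2 = me G 1 1 + me G 1 2 + me G 1 3 + me G 1 4 + me G 2 2 + me G 2 3 + me G 2 4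
                 + me G 3 3 + me G 3 4 + me G 4 4"
    and "nv G 1 = 2 * me G 1 1 + me G 1 2 + me G 1 3 + me G 1 4"
    and "2 * nv G 2 = me G 1 2 + 2 * me G 2 2 + me G 2 3 + me G 2 4"
    and "3 * nv G 3 = me G 1 3 + me G 2 3 + 2 * me G 3 3 + me G 3 4"
    and "4 * nv G 4 = me G 1 4 + me G 2 4 + me G 3 4 + 2 * me G 4 4"
proof -
  note sg = CTG_imp_simple_graph[OF assms] and deg4 = CTG_imp_degree_le_4[OF assms]
  have cg: "connected_graph G" and cards: "card (fst G) = n" "card (snd G) = n + 2"
    using assms unfolding CTG_def tricyclic_def by auto
  have "2 \<le> card (fst G)" using card_verts_ge_2[OF sg] cards by fastforce
  then show "n = nv G 1 + nv G 2 + nv G 3 + nv G 4"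
    using card_verts_eq_sum_nv[OF cg _ deg4] cards by (simp add: numeral_eq_Suc)
  show "n + 2 = me G 1 1 + me G 1 2 + me G 1 3 + me G 1 4 + me G 2 2 + me G 2 3 + me G 2 4
                 + me G 3 3 + me G 3 4 + me G 4 4"
    using card_edges_eq_sum_me[OF sg deg4] cards by (simp add: degree_pairs_4)
  show "nv G 1 = 2 * me G 1 1 + me G 1 2 + me G 1 3 + me G 1 4"
    "2 * nv G 2 = me G 1 2 + 2 * me G 2 2 + me G 2 3 + me G 2 4"
    "3 * nv G 3 = me G 1 3 + me G 2 3 + 2 * me G 3 3 + me G 3 4"
    "4 * nv G 4 = me G 1 4 + me G 2 4 + me G 3 4 + 2 * me G 4 4"
    using nv_handshake[OF sg deg4, of 1] nv_handshake[OF sg deg4, of 2]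
      nv_handshake[OF sg deg4, of 3] nv_handshake[OF sg deg4, of 4]
    by (simp_all add: degree_pairs_4)
qed

lemma sqrt_8: "sqrt 8 = 2 * sqrt 2"
  using real_sqrt_mult[of 4 2] by simp

lemma sqrt_18: "sqrt 18 = 3 * sqrt 2"
  using real_sqrt_mult[of 9 2] by simp

lemma SO_red_chemical:
  assumes "simple_graph G" "chemical G"
  shows "SO_red G = me G 1 2 + 2 * me G 1 3 + 3 * me G 1 4 + sqrt 2 * me G 2 2
    + sqrt 5 * me G 2 3 + sqrt 10 * me G 2 4 + 2 * sqrt 2 * me G 3 3 + sqrt 13 * me G 3 4
    + 3 * sqrt 2 * me G 4 4"
proof -
  have "SO_red G
      = (\<Sum>(a, b)\<in>degree_pairs 4. real (me G a b) * sqrt ((real a - 1)\<^sup>2 + (real b - 1)\<^sup>2))"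
    unfolding SO_red_def
    using sum_edges_endpoint_sum_by_degree_pairs[OF assms(1), of 4 sqrt "\<lambda>d. (real d - 1)\<^sup>2"]
      assms(2)
    by (simp add: chemical_def)
  then show ?thesis by (simp add: degree_pairs_4 sqrt_8 sqrt_18 algebra_simps)
qed

text \<open>The coefficients arise from eliminating \<open>m_22\<close>, \<open>m_33\<close> and n by the degree equations;
  all of them are positive.\<close>

definition SO_excess :: "'a graph \<Rightarrow> real" where
  "SO_excess G = 2 * sqrt 2 * me G 1 1 + (1 + sqrt 2 / 2) * me G 1 2 + 2 * me G 1 3
    + (3 - sqrt 2 / 4) * me G 1 4 + (sqrt 5 - 3 / 2 * sqrt 2) * me G 2 3
    + (sqrt 10 - 7 / 4 * sqrt 2) * me G 2 4 + (sqrt 13 - 9 / 4 * sqrt 2) * me G 3 4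
    + sqrt 2 / 2 * me G 4 4"

lemma SO_red_eq_excess:
  assumes "CTG n G"
  shows "SO_red G = (real n + 8) * sqrt 2 + SO_excess G"
proof -
  have "4 * me G 2 2 + 8 * me G 3 3 + me G 1 4 + 6 * me G 2 3 + 7 * me G 2 4 + 9 * me G 3 4
      + 10 * me G 4 4 = 4 * n + 32 + 8 * me G 1 1 + 2 * me G 1 2"
    using CTG_degree_equations[OF assms] by linarith
  then have "4 * real (me G 2 2) + 8 * me G 3 3 + me G 1 4 + 6 * me G 2 3 + 7 * me G 2 4
      + 9 * me G 3 4 + 10 * me G 4 4 = 4 * real n + 32 + 8 * me G 1 1 + 2 * me G 1 2"
    by (metis (mono_tags) of_nat_add of_nat_mult of_nat_numeral)
  then have m22: "real (me G 2 2) = real n + 8 + 2 * me G 1 1 + me G 1 2 / 2 - me G 1 4 / 4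
      - 3 / 2 * me G 2 3 - 7 / 4 * me G 2 4 - 2 * me G 3 3 - 9 / 4 * me G 3 4 - 5 / 2 * me G 4 4"
    by linarith
  have "chemical G" using assms by (simp add: CTG_def)
  then show ?thesis
    unfolding SO_red_chemical[OF CTG_imp_simple_graph[OF assms] \<open>chemical G\<close>] SO_excess_def m22
    by (simp add: algebra_simps)
qed

lemma sqrt_2_bounds: "141421 / 100000 < sqrt 2" "sqrt 2 < 141422 / 100000"
  by (rule real_less_rsqrt real_less_lsqrt; simp add: power2_eq_square)+

lemma sqrt_5_bounds: "223606 / 100000 < sqrt 5" "sqrt 5 < 223607 / 100000"
  by (rule real_less_rsqrt real_less_lsqrt; simp add: power2_eq_square)+

lemma sqrt_10_gt: "316227 / 100000 < sqrt 10"
  by (rule real_less_rsqrt) (simp add: power2_eq_square)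

lemma sqrt_13_gt: "360555 / 100000 < sqrt 13"
  by (rule real_less_rsqrt) (simp add: power2_eq_square)

section \<open>Graphs of small excess\<close>

text \<open>The coefficients of \<^const>\<open>SO_excess\<close> and the bound \<open>1 + sqrt 5 - sqrt 2 < 1.822\<close>,
  scaled by 1000 and rounded in the safe direction.\<close>

lemma weighted_me_bound_if_small_excess:
  assumes "SO_excess G \<le> 1 + sqrt 5 - sqrt 2"
  shows "2828 * me G 1 1 + 1707 * me G 1 2 + 2000 * me G 1 3 + 2646 * me G 1 4 + 114 * me G 2 3
    + 687 * me G 2 4 + 423 * me G 3 4 + 707 * me G 4 4 \<le> 1822"
proof -
  have "2828 / 1000 \<le> 2 * sqrt 2" "1707 / 1000 \<le> 1 + sqrt 2 / 2" "2646 / 1000 \<le> 3 - sqrt 2 / 4"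
    "114 / 1000 \<le> sqrt 5 - 3 / 2 * sqrt 2" "687 / 1000 \<le> sqrt 10 - 7 / 4 * sqrt 2"
    "423 / 1000 \<le> sqrt 13 - 9 / 4 * sqrt 2" "707 / 1000 \<le> sqrt 2 / 2"
    using sqrt_2_bounds sqrt_5_bounds sqrt_10_gt sqrt_13_gt by auto
  then have "2828 / 1000 * me G 1 1 + 1707 / 1000 * me G 1 2 + 2 * me G 1 3
      + 2646 / 1000 * me G 1 4 + 114 / 1000 * me G 2 3 + 687 / 1000 * me G 2 4
      + 423 / 1000 * me G 3 4 + 707 / 1000 * me G 4 4 \<le> SO_excess G"
    unfolding SO_excess_def by (intro add_mono mult_right_mono) auto
  then have "real (2828 * me G 1 1 + 1707 * me G 1 2 + 2000 * me G 1 3 + 2646 * me G 1 4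
      + 114 * me G 2 3 + 687 * me G 2 4 + 423 * me G 3 4 + 707 * me G 4 4) \<le> real (1822 :: nat)"
    using assms sqrt_2_bounds sqrt_5_bounds by (simp only: of_nat_add of_nat_mult of_nat_numeral)
  then show ?thesis by (simp only: of_nat_le_iff)
qed

lemma degree_counts_of_small_excess:
  fixes N :: nat and c :: "nat \<Rightarrow> nat" and m :: "nat \<Rightarrow> nat \<Rightarrow> nat"
  assumes verts: "N = c 1 + c 2 + c 3 + c 4"
    and edges: "N + 2 = m 1 1 + m 1 2 + m 1 3 + m 1 4 + m 2 2 + m 2 3 + m 2 4 + m 3 3 + m 3 4
                        + m 4 4"
    and "6 \<le> N"
    and hs1: "c 1 = 2 * m 1 1 + m 1 2 + m 1 3 + m 1 4"
    and hs2: "2 * c 2 = m 1 2 + 2 * m 2 2 + m 2 3 + m 2 4"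
    and hs3: "3 * c 3 = m 1 3 + m 2 3 + 2 * m 3 3 + m 3 4"
    and hs4: "4 * c 4 = m 1 4 + m 2 4 + m 3 4 + 2 * m 4 4"
    and m44: "m 4 4 \<le> c 4 choose 2" and m34: "m 3 4 \<le> c 3 * c 4"
    and leaving: "0 < c 3 \<Longrightarrow> c 3 < N \<Longrightarrow> 0 < m 1 3 + m 2 3 + m 3 4"
    and small: "2828 * m 1 1 + 1707 * m 1 2 + 2000 * m 1 3 + 2646 * m 1 4 + 114 * m 2 3
      + 687 * m 2 4 + 423 * m 3 4 + 707 * m 4 4 \<le> 1822"
  shows "(\<exists>j\<le>5. c 1 = 0 \<and> c 2 + 4 = N \<and> c 3 = 4 \<and> c 4 = 0 \<and>
            m 2 2 + 5 + j = N \<and> m 2 3 = 2 + 2 * j \<and> m 3 3 + j = 5 \<and>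
            m 1 1 = 0 \<and> m 1 2 = 0 \<and> m 1 3 = 0 \<and> m 1 4 = 0 \<and> m 2 4 = 0 \<and> m 3 4 = 0 \<and> m 4 4 = 0)
       \<or> (c 1 = 1 \<and> c 2 + 6 = N \<and> c 3 = 5 \<and> c 4 = 0 \<and>
            m 2 2 + 7 = N \<and> m 1 2 = 1 \<and> m 2 3 = 1 \<and> m 3 3 = 7 \<and>
            m 1 1 = 0 \<and> m 1 3 = 0 \<and> m 1 4 = 0 \<and> m 2 4 = 0 \<and> m 3 4 = 0 \<and> m 4 4 = 0)"
proof -
  \<comment> \<open>\<open>\<Sum>\<^sub>d (d - 2) c d = 2 (|E| - |V|) = 4\<close>\<close>
  have degree_excess: "c 3 + 2 * c 4 = 4 + c 1"
    using verts edges hs1 hs2 hs3 hs4 by linarith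
  have "c 1 \<le> 1" using hs1 small by linarith
  then consider "c 1 = 0" | "c 1 = 1" by linarith
  then show ?thesis
  proof cases
    case 1
    then have z1: "m 1 1 = 0" "m 1 2 = 0" "m 1 3 = 0" "m 1 4 = 0" using hs1 by auto
    have "c 4 = 0"
    proof (rule ccontr)
      assume "c 4 \<noteq> 0"
      then have "c 4 = 1 \<and> c 3 = 2 \<or> c 4 = 2 \<and> c 3 = 0" using degree_excess 1 by arith
      then show False
      proof (elim disjE conjE)
        assume "c 4 = 1" "c 3 = 2"
        then have "m 4 4 = 0" "m 3 4 \<le> 2" using m44 m34 by (auto simp: numeral_2_eq_2)
        then show False using hs4 small z1 \<open>c 4 = 1\<close> by linarith
      next
        assume "c 4 = 2" "c 3 = 0"
        then have "m 4 4 \<le> 1" "m 3 4 = 0" using m44 m34 by (auto simp: numeral_2_eq_2)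
        then show False using hs4 small z1 \<open>c 4 = 2\<close> by linarith
      qed
    qed
    then have "c 3 = 4" and z4: "m 2 4 = 0" "m 3 4 = 0" "m 4 4 = 0"
      using degree_excess 1 hs4 z1 by auto
    then have m23_m33: "m 2 3 + 2 * m 3 3 = 12" using hs3 z1 by simp
    have "0 < m 2 3" using leaving \<open>c 3 = 4\<close> \<open>6 \<le> N\<close> z1 z4 by simp
    then have "m 3 3 \<le> 5" using m23_m33 by linarith
    show ?thesis
      by (intro disjI1 exI[of _ "5 - m 3 3"])
        (use verts edges m23_m33 \<open>m 3 3 \<le> 5\<close> 1 \<open>c 3 = 4\<close> \<open>c 4 = 0\<close> z1 z4 in arith)
  next
    case 2
    have z1: "m 1 1 = 0" "m 1 3 = 0" "m 1 4 = 0" using small by linarith+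
    then have "m 1 2 = 1" using hs1 2 by linarith
    then have z4: "m 2 4 = 0" "m 3 4 = 0" "m 4 4 = 0" using small by linarith+
    then have "c 4 = 0" "c 3 = 5" using hs4 z1 degree_excess 2 by linarith+
    then have m23_m33: "m 2 3 + 2 * m 3 3 = 15" using hs3 z1 z4 by simp
    have "m 2 3 \<le> 1" using small \<open>m 1 2 = 1\<close> by linarith
    then have "m 2 3 = 1" "m 3 3 = 7" using m23_m33 by arith+
    then show ?thesis
      using verts edges 2 \<open>m 1 2 = 1\<close> \<open>c 4 = 0\<close> \<open>c 3 = 5\<close> z1 z4 by arith
  qed
qed

lemma gamma9I:
  assumes C: "CTG n G"
    and "nv G 1 = 0" "nv G 2 + 4 = n" "nv G 3 = 4" "nv G 4 = 0"
    and "me G 2 2 + 5 + j = n" "me G 2 3 = 2 + 2 * j" "me G 3 3 + j = 5"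
    and "me G 1 1 = 0" "me G 1 2 = 0" "me G 1 3 = 0" "me G 1 4 = 0"
      "me G 2 4 = 0" "me G 3 4 = 0" "me G 4 4 = 0"
  shows "gamma9 n j G"
proof -
  have "me G a b = 0" if "{a, b} \<notin> {{2,3}, {3,3}, {2,2}}" for a b
    using me_eq_0_outside[OF CTG_imp_simple_graph[OF C] CTG_imp_degree_le_4[OF C] _ that]
      assms(9-15)
    by (simp add: degree_pairs_4 doubleton_eq_iff)
  moreover have "int (nv G 2) = int n - 4" "int (me G 2 3) = 2 + 2 * int j"
    "int (me G 3 3) = 5 - int j" "int (me G 2 2) = int n - 5 - int j"
    using assms(3,6-8) by linarith+
  ultimately show ?thesis using assms(1-5) unfolding gamma9_def by blast
qed

lemma gamma65I:
  assumes C: "CTG n G"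
    and "nv G 1 = 1" "nv G 2 + 6 = n" "nv G 3 = 5" "nv G 4 = 0"
    and "me G 2 2 + 7 = n" "me G 1 2 = 1" "me G 2 3 = 1" "me G 3 3 = 7"
    and "me G 1 1 = 0" "me G 1 3 = 0" "me G 1 4 = 0"
      "me G 2 4 = 0" "me G 3 4 = 0" "me G 4 4 = 0"
  shows "gamma65 n G"
proof -
  have "me G a b = 0" if "{a, b} \<notin> {{1,2}, {2,3}, {3,3}, {2,2}}" for a b
    using me_eq_0_outside[OF CTG_imp_simple_graph[OF C] CTG_imp_degree_le_4[OF C] _ that]
      assms(10-15)
    by (simp add: degree_pairs_4 doubleton_eq_iff)
  moreover have "int (nv G 2) = int n - 6" "int (me G 2 2) = int n - 7"
    using assms(3,6) by linarith+
  ultimately show ?thesis using assms(1-5,7-9) unfolding gamma65_def by blast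
qed

lemma gamma_of_small_excess:
  assumes C: "CTG n G" and "6 \<le> n" and small: "SO_excess G \<le> 1 + sqrt 5 - sqrt 2"
  shows "(\<exists>j\<le>5. gamma9 n j G) \<or> gamma65 n G"
proof -
  have cg: "connected_graph G" and card_verts: "card (fst G) = n"
    using C unfolding CTG_def tricyclic_def by auto
  note sg = CTG_imp_simple_graph[OF C] and deg4 = CTG_imp_degree_le_4[OF C]
  have leaving: "0 < me G 1 3 + me G 2 3 + me G 3 4" if "0 < nv G 3" and "nv G 3 < n"
  proof -
    obtain d where "1 \<le> d" "d \<le> 4" "d \<noteq> 3" "0 < me G 3 d"
      using me_pos_leaving_degree_class[OF cg deg4 \<open>0 < nv G 3\<close>] \<open>nv G 3 < n\<close> card_verts
      by auto
    then have "d = 1 \<or> d = 2 \<or> d = 4" "0 < me G 3 d" by arith+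
    then show ?thesis using me_commute[of G 3 1] me_commute[of G 3 2] by auto
  qed
  from degree_counts_of_small_excess[where N = n and c = "nv G" and m = "me G",
      OF CTG_degree_equations(1,2)[OF C] \<open>6 \<le> n\<close> CTG_degree_equations(3-6)[OF C]
      me_le_choose[OF sg] me_le_mult[OF sg] leaving weighted_me_bound_if_small_excess[OF small]]
  show ?thesis
    using gamma9I[OF C] gamma65I[OF C] by blast
qed

lemma SO_red_gamma9:
  assumes "gamma9 n j G"
  shows "SO_red G = (real n + 8) * sqrt 2 + (2 + 2 * real j) * (sqrt 5 - 3 / 2 * sqrt 2)"
proof -
  have C: "CTG n G" and m23: "int (me G 2 3) = 2 + 2 * int j"
    and zero: "\<And>a b. {a, b} \<notin> {{2,3}, {3,3}, {2,2}} \<Longrightarrow> me G a b = 0"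
    using assms unfolding gamma9_def by simp_all
  have "me G 1 1 = 0" "me G 1 2 = 0" "me G 1 3 = 0" "me G 1 4 = 0"
    "me G 2 4 = 0" "me G 3 4 = 0" "me G 4 4 = 0"
    using zero by (simp_all add: doubleton_eq_iff)
  moreover have "real (me G 2 3) = 2 + 2 * real j"
    using arg_cong[OF m23, of real_of_int] by simp
  ultimately have "SO_excess G = (2 + 2 * real j) * (sqrt 5 - 3 / 2 * sqrt 2)"
    unfolding SO_excess_def by simp
  then show ?thesis using SO_red_eq_excess[OF C] by simp
qed

lemma SO_red_gamma65:
  assumes "gamma65 n G"
  shows "SO_red G = (real n + 8) * sqrt 2 + (1 + sqrt 5 - sqrt 2)"
proof -
  have C: "CTG n G" and m12_m23: "me G 1 2 = 1" "me G 2 3 = 1"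
    and zero: "\<And>a b. {a, b} \<notin> {{1,2}, {2,3}, {3,3}, {2,2}} \<Longrightarrow> me G a b = 0"
    using assms unfolding gamma65_def by simp_all
  have "me G 1 1 = 0" "me G 1 3 = 0" "me G 1 4 = 0" "me G 2 4 = 0"
    "me G 3 4 = 0" "me G 4 4 = 0"
    using zero by (simp_all add: doubleton_eq_iff)
  then have "SO_excess G = 1 + sqrt 5 - sqrt 2"
    unfolding SO_excess_def using m12_m23 by simp
  then show ?thesis using SO_red_eq_excess[OF C] by simp
qed

theorem theorem3p13:
  fixes n :: nat and G1 G2 G3 G4 G5 G6 G7 G :: "'a graph"
  assumes "n \<ge> 6"
    and "gamma9 n 0 G1" and "gamma9 n 1 G2" and "gamma9 n 2 G3"
    and "gamma9 n 3 G4" and "gamma9 n 4 G5" and "gamma9 n 5 G6"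
    and "gamma65 n G7"
    and "CTG n G"
    and "\<forall>j\<le>5. \<not> gamma9 n j G" and "\<not> gamma65 n G"
  shows "SO_red G1 < SO_red G2 \<and> SO_red G2 < SO_red G3 \<and> SO_red G3 < SO_red G4 \<and>
         SO_red G4 < SO_red G5 \<and> SO_red G5 < SO_red G6 \<and> SO_red G6 < SO_red G7 \<and>
         SO_red G7 < SO_red G"
proof -
  define c where "c = sqrt 5 - 3 / 2 * sqrt 2"
  let ?base = "(real n + 8) * sqrt 2"
  have "0 < c" "12 * c < 1 + sqrt 5 - sqrt 2"
    unfolding c_def using sqrt_2_bounds sqrt_5_bounds by (simp_all add: algebra_simps)
  moreover have "SO_red G1 = ?base + 2 * c" "SO_red G2 = ?base + 4 * c"
    "SO_red G3 = ?base + 6 * c" "SO_red G4 = ?base + 8 * c" "SO_red G5 = ?base + 10 * c"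
    "SO_red G6 = ?base + 12 * c"
    using SO_red_gamma9[OF assms(2)] SO_red_gamma9[OF assms(3)] SO_red_gamma9[OF assms(4)]
      SO_red_gamma9[OF assms(5)] SO_red_gamma9[OF assms(6)] SO_red_gamma9[OF assms(7)]
    by (simp_all add: c_def)
  moreover have "SO_red G7 < SO_red G"
  proof (rule ccontr)
    assume "\<not> SO_red G7 < SO_red G"
    then have "SO_excess G \<le> 1 + sqrt 5 - sqrt 2"
      using SO_red_eq_excess[OF assms(9)] SO_red_gamma65[OF assms(8)] by simp
    then show False
      using gamma_of_small_excess[OF assms(9,1)] assms(10,11) by blast
  qed
  ultimately show ?thesis
    using SO_red_gamma65[OF assms(8)] by linarith
qed

end
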